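(* Every distinguished variety in $\mathbb G_n$ is polynomially convex.
   Context: $\mathbb G_n=\pi_n(\mathbb D^n)$, $\Gamma_n=\pi_n(\overline{\mathbb D}^n)$, $b\Gamma_n=\pi_n(\mathbb T^n)$, where $\pi_n(z)=(e_1(z),\dots,e_{n-1}(z),z_1\cdots z_n)$ with $e_k$ the elementary symmetric polynomials. A distinguished variety in $\mathbb G_n$ is a set $\Lambda=V\cap\mathbb G_n$, $V$ the common zero set of some set of polynomials, such that $\overline{\Lambda}\cap\partial\Gamma_n=\overline{\Lambda}\cap b\Gamma_n$. *)

theory Defs
  imports "HOL-Analysis.Analysis"
begin

text \<open>Points of C^n are represented as functions nat => complex vanishing at indices >= n
  (coordinates z 0, ..., z (n-1)). The product topology on nat => complex restricted to this
  set is the Euclidean topology of C^n.\<close>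

definition Cn :: "nat \<Rightarrow> (nat \<Rightarrow> complex) set" where
  "Cn n = {z. \<forall>i\<ge>n. z i = 0}"

inductive_set poly_fun :: "nat \<Rightarrow> ((nat \<Rightarrow> complex) \<Rightarrow> complex) set" for n :: nat where
  const: "(\<lambda>z. c) \<in> poly_fun n"
| coord: "i < n \<Longrightarrow> (\<lambda>z. z i) \<in> poly_fun n"
| add: "p \<in> poly_fun n \<Longrightarrow> q \<in> poly_fun n \<Longrightarrow> (\<lambda>z. p z + q z) \<in> poly_fun n"
| mult: "p \<in> poly_fun n \<Longrightarrow> q \<in> poly_fun n \<Longrightarrow> (\<lambda>z. p z * q z) \<in> poly_fun n"

definition elem_sym :: "nat \<Rightarrow> nat \<Rightarrow> (nat \<Rightarrow> complex) \<Rightarrow> complex" where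
  "elem_sym n k z = (\<Sum>S\<in>{S. S \<subseteq> {..<n} \<and> card S = k}. \<Prod>i\<in>S. z i)"

definition sym_map :: "nat \<Rightarrow> (nat \<Rightarrow> complex) \<Rightarrow> (nat \<Rightarrow> complex)" where
  "sym_map n z = (\<lambda>k. if k + 1 < n then elem_sym n (k + 1) z
                       else if k + 1 = n then (\<Prod>i<n. z i) else 0)"

definition polydisc :: "nat \<Rightarrow> (nat \<Rightarrow> complex) set" where
  "polydisc n = {z \<in> Cn n. \<forall>i<n. norm (z i) < 1}"

definition closed_polydisc :: "nat \<Rightarrow> (nat \<Rightarrow> complex) set" where
  "closed_polydisc n = {z \<in> Cn n. \<forall>i<n. norm (z i) \<le> 1}"

definition torus :: "nat \<Rightarrow> (nat \<Rightarrow> complex) set" where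
  "torus n = {z \<in> Cn n. \<forall>i<n. norm (z i) = 1}"

definition symG :: "nat \<Rightarrow> (nat \<Rightarrow> complex) set" where
  "symG n = sym_map n ` polydisc n"

definition symGamma :: "nat \<Rightarrow> (nat \<Rightarrow> complex) set" where
  "symGamma n = sym_map n ` closed_polydisc n"

definition symbGamma :: "nat \<Rightarrow> (nat \<Rightarrow> complex) set" where
  "symbGamma n = sym_map n ` torus n"

definition topbdGamma :: "nat \<Rightarrow> (nat \<Rightarrow> complex) set" where
  "topbdGamma n = (subtopology euclidean (Cn n)) frontier_of (symGamma n)"

definition zero_set :: "nat \<Rightarrow> ((nat \<Rightarrow> complex) \<Rightarrow> complex) set \<Rightarrow> (nat \<Rightarrow> complex) set" where
  "zero_set n P = {z \<in> Cn n. \<forall>p\<in>P. p z = 0}"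

definition distinguished_variety :: "nat \<Rightarrow> (nat \<Rightarrow> complex) set \<Rightarrow> bool" where
  "distinguished_variety n \<Lambda> \<longleftrightarrow>
     (\<exists>P. P \<subseteq> poly_fun n \<and> \<Lambda> = zero_set n P \<inter> symG n) \<and>
     closure \<Lambda> \<inter> topbdGamma n = closure \<Lambda> \<inter> symbGamma n"

definition poly_hull :: "nat \<Rightarrow> (nat \<Rightarrow> complex) set \<Rightarrow> (nat \<Rightarrow> complex) set" where
  "poly_hull n K = {z \<in> Cn n. \<forall>p\<in>poly_fun n. \<forall>B::real.
      (\<forall>w\<in>K. norm (p w) \<le> B) \<longrightarrow> norm (p z) \<le> B}"

definition poly_convex :: "nat \<Rightarrow> (nat \<Rightarrow> complex) set \<Rightarrow> bool" where
  "poly_convex n X \<longleftrightarrow> X \<subseteq> Cn n \<and> (\<forall>K. compact K \<and> K \<subseteq> X \<longrightarrow> poly_hull n K \<subseteq> X)"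

end

theory Submission
  imports Defs "HOL-Computational_Algebra.Fundamental_Theorem_Algebra"
begin

(* Polynomials vanishing on K vanish on its polynomial hull, so it suffices that hulls of compact
   subsets of G_n stay in G_n.
   By Vieta and the fundamental theorem of algebra, pi_n maps C^n onto C^n and every symmetric
   product prod_i phi(mu_i) of a one-variable polynomial phi is a polynomial in pi_n(mu).
   For compact K in G_n all preimage coordinates of points of K have modulus at most some r < 1.
   If pi_n(l) lies in the hull of K and R = max |l_i| > r, pick rho strictly between R and all
   smaller moduli (and r); then phi(x) = 1 + (x/rho)^m with m large is at most 2 on the disc of
   radius r but prod_i |phi(l_i)| > 2^n, which contradicts the hull inequality. *)

lemma poly_fun_sum:
  assumes "finite A" "\<And>a. a \<in> A \<Longrightarrow> (\<lambda>z. f a z) \<in> poly_fun n"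
  shows "(\<lambda>z. \<Sum>a\<in>A. f a z) \<in> poly_fun n"
  using assms by (induction A rule: finite_induct) (auto intro: poly_fun.intros)

lemma poly_fun_prod:
  assumes "finite A" "\<And>a. a \<in> A \<Longrightarrow> (\<lambda>z. f a z) \<in> poly_fun n"
  shows "(\<lambda>z. \<Prod>a\<in>A. f a z) \<in> poly_fun n"
  using assms by (induction A rule: finite_induct) (auto intro: poly_fun.intros)

definition sym_coord :: "(nat \<Rightarrow> complex) \<Rightarrow> nat \<Rightarrow> complex" where
  "sym_coord z k = (if k = 0 then 1 else z (k - 1))"

(* For z = pi_n(l), sym_coord z k is e_k(l) (with e_0 = 1), so root_poly n z = prod_i (t - l_i). *)
definition root_poly :: "nat \<Rightarrow> (nat \<Rightarrow> complex) \<Rightarrow> complex poly" where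
  "root_poly n z = (\<Sum>k\<le>n. monom ((-1)^k * sym_coord z k) (n - k))"

lemma poly_root_poly: "poly (root_poly n z) t = (\<Sum>k\<le>n. (-1)^k * sym_coord z k * t^(n - k))"
  by (simp add: root_poly_def poly_sum poly_monom)

lemma poly_root_poly_in_poly_fun: "(\<lambda>z. poly (root_poly n z) t) \<in> poly_fun n"
  unfolding poly_root_poly
proof (rule poly_fun_sum)
  fix k assume "k \<in> {..n}"
  then have "(\<lambda>z. sym_coord z k) \<in> poly_fun n"
    by (cases "k = 0") (auto simp: sym_coord_def intro: poly_fun.intros)
  then show "(\<lambda>z. (-1)^k * sym_coord z k * t^(n - k)) \<in> poly_fun n"
    by (intro poly_fun.mult poly_fun.const)
qed simp

lemma continuous_on_poly_root_poly:
  "continuous_on UNIV (\<lambda>x::(nat \<Rightarrow> complex) \<times> complex. poly (root_poly n (fst x)) (snd x))"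
proof -
  have "continuous_on UNIV (\<lambda>x::(nat \<Rightarrow> complex) \<times> complex. sym_coord (fst x) k)" for k
  proof (cases "k = 0")
    case False
    have "continuous_on UNIV (\<lambda>x::(nat \<Rightarrow> complex) \<times> complex. fst x (k - 1))"
      by (rule continuous_on_compose2[OF continuous_on_product_coordinates continuous_on_fst]) auto
    then show ?thesis using False by (simp add: sym_coord_def)
  qed (simp add: sym_coord_def)
  then show ?thesis
    unfolding poly_root_poly by (intro continuous_intros)
qed

lemma coeff_root_poly:
  "coeff (root_poly n z) i = (if i \<le> n then (-1)^(n - i) * sym_coord z (n - i) else 0)"
proof -
  have "coeff (root_poly n z) i = (\<Sum>k\<le>n. if k = n - i \<and> i \<le> n then (-1)^k * sym_coord z k else 0)"
    unfolding root_poly_def coeff_sum coeff_monom by (intro sum.cong) auto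
  then show ?thesis
    by (simp add: sum.delta)
qed

lemma degree_root_poly: "degree (root_poly n z) = n"
  by (intro antisym degree_le le_degree) (auto simp: coeff_root_poly sym_coord_def)

lemma lead_coeff_root_poly: "lead_coeff (root_poly n z) = 1"
  by (simp add: degree_root_poly coeff_root_poly sym_coord_def)

lemma elem_sym_0: "elem_sym n 0 z = 1"
proof -
  have "{S. S \<subseteq> {..<n} \<and> card S = 0} = {{}}"
    using finite_subset[of _ "{..<n}"] by auto
  then show ?thesis by (simp add: elem_sym_def)
qed

lemma elem_sym_self: "elem_sym n n z = (\<Prod>i<n. z i)"
proof -
  have "{S. S \<subseteq> {..<n} \<and> card S = n} = {{..<n}}"
    using card_subset_eq[of "{..<n}"] by auto
  then show ?thesis by (simp add: elem_sym_def)
qed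

lemma sym_coord_sym_map: "k \<le> n \<Longrightarrow> sym_coord (sym_map n z) k = elem_sym n k z"
  by (cases "k = 0"; cases "k = n") (auto simp: sym_coord_def sym_map_def elem_sym_0 elem_sym_self)

lemma poly_root_poly_sym_map: "poly (root_poly n (sym_map n z)) t = (\<Prod>i<n. t - z i)"
proof -
  have "(\<Prod>i<n. t - z i) = (\<Prod>i<n. - z i + t)" by simp
  also have "\<dots> = (\<Sum>X\<in>Pow {..<n}. (\<Prod>i\<in>X. - z i) * (\<Prod>i\<in>{..<n} - X. t))"
    by (rule prod_add) simp
  also have "\<dots> = (\<Sum>X\<in>Pow {..<n}. (-1)^card X * (\<Prod>i\<in>X. z i) * t^(n - card X))"
  proof (rule sum.cong)
    fix X assume "X \<in> Pow {..<n}"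
    then have "finite X" "card ({..<n} - X) = n - card X"
      using finite_subset[of X "{..<n}"] by (auto simp: card_Diff_subset)
    then show "(\<Prod>i\<in>X. - z i) * (\<Prod>i\<in>{..<n} - X. t)
        = (-1)^card X * (\<Prod>i\<in>X. z i) * t^(n - card X)"
      by (simp add: prod_uminus)
  qed simp
  also have "\<dots> = (\<Sum>k\<le>n. \<Sum>X | X \<in> Pow {..<n} \<and> card X = k.
      (-1)^card X * (\<Prod>i\<in>X. z i) * t^(n - card X))"
    by (rule sum.group[symmetric]) (auto simp: card_mono[of "{..<n}", simplified])
  also have "\<dots> = (\<Sum>k\<le>n. (-1)^k * elem_sym n k z * t^(n - k))"
    unfolding elem_sym_def sum_distrib_left sum_distrib_right
    by (intro sum.cong) (auto simp: mult_ac)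
  also have "\<dots> = poly (root_poly n (sym_map n z)) t"
    by (simp add: poly_root_poly sym_coord_sym_map)
  finally show ?thesis by simp
qed

lemma sym_map_in_Cn: "sym_map n z \<in> Cn n"
  by (simp add: Cn_def sym_map_def)

lemma root_poly_inj_on_Cn:
  assumes "z \<in> Cn n" "w \<in> Cn n" "root_poly n z = root_poly n w"
  shows "z = w"
proof
  fix k
  show "z k = w k"
  proof (cases "k < n")
    case True
    then show ?thesis
      using arg_cong[OF assms(3), of "\<lambda>p. coeff p (n - Suc k)"]
      by (simp add: coeff_root_poly sym_coord_def)
  qed (use assms(1,2) in \<open>simp add: Cn_def\<close>)
qed

lemma Cn_subset_sym_map_image: "Cn n \<subseteq> sym_map n ` Cn n"
proof
  fix z assume z: "z \<in> Cn n"
  obtain root where root: "smult (lead_coeff (root_poly n z)) (\<Prod>i<degree (root_poly n z). [:-root i, 1:])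
      = root_poly n z"
    using complex_poly_decompose' by blast
  define l where "l i = (if i < n then root i else 0)" for i
  have "poly (root_poly n z) t = poly (root_poly n (sym_map n l)) t" for t
    using arg_cong[OF root, of "\<lambda>p. poly p t"]
    by (simp add: poly_root_poly_sym_map lead_coeff_root_poly degree_root_poly poly_prod l_def
        coeff_root_poly sym_coord_def)
  then have "z = sym_map n l"
    using root_poly_inj_on_Cn[OF z sym_map_in_Cn] poly_eq_poly_eq_iff by blast
  moreover have "l \<in> Cn n" by (simp add: Cn_def l_def)
  ultimately show "z \<in> sym_map n ` Cn n" by blast
qed

lemma symmetric_prod_in_poly_fun:
  fixes p :: "complex poly"
  obtains G where "G \<in> poly_fun n" "\<And>l. G (sym_map n l) = (\<Prod>i<n. poly p (l i))"
proof -
  obtain root where root: "smult (lead_coeff p) (\<Prod>k<degree p. [:-root k, 1:]) = p"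
    using complex_poly_decompose' by blast
  define c where "c = lead_coeff p"
  define d where "d = degree p"
  have p_eq: "poly p y = c * (\<Prod>k<d. y - root k)" for y
    using arg_cong[OF root, of "\<lambda>q. poly q y"] by (simp add: poly_prod c_def d_def)
  define G where "G z = c^n * (\<Prod>k<d. (-1)^n * poly (root_poly n z) (root k))" for z
  show thesis
  proof
    show "G \<in> poly_fun n"
      unfolding G_def
      by (intro poly_fun.mult poly_fun.const poly_fun_prod poly_root_poly_in_poly_fun) simp
  next
    fix l
    have "(-1)^n * (\<Prod>i<n. x - l i) = (\<Prod>i<n. l i - x)" for x :: complex
      using prod_uminus[of "\<lambda>i. x - l i" "{..<n}"] by simp
    then have "G (sym_map n l) = c^n * (\<Prod>k<d. \<Prod>i<n. l i - root k)"
      by (simp add: G_def poly_root_poly_sym_map)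
    also have "\<dots> = (\<Prod>i<n. c * (\<Prod>k<d. l i - root k))"
      by (simp add: prod.distrib prod.swap[of _ "{..<d}"])
    finally show "G (sym_map n l) = (\<Prod>i<n. poly p (l i))"
      by (simp add: p_eq)
  qed
qed

lemma compact_subset_ball_radius:
  fixes T :: "'a::real_normed_vector set"
  assumes "compact T" "T \<subseteq> ball 0 1"
  obtains r where "0 \<le> r" "r < 1" "T \<subseteq> cball 0 r"
proof -
  have "\<exists>x\<in>insert 0 T. \<forall>y\<in>insert 0 T. norm y \<le> norm x"
    using assms(1) by (intro continuous_attains_sup continuous_on_norm_id) auto
  then obtain x where x: "x \<in> insert 0 T" "\<And>y. y \<in> insert 0 T \<Longrightarrow> norm y \<le> norm x"
    by blast
  show thesis
  proof
    show "0 \<le> norm x"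
      by simp
    show "T \<subseteq> cball 0 (norm x)"
      using x(2) by auto
    show "norm x < 1"
      using x(1) assms(2) by auto
  qed
qed

lemma symG_compact_root_bound:
  assumes "compact K" "K \<subseteq> symG n"
  obtains r where "0 \<le> r" "r < 1"
    and "\<And>l i. sym_map n l \<in> K \<Longrightarrow> i < n \<Longrightarrow> cmod (l i) \<le> r"
proof -
  define roots where
    "roots = snd ` ((K \<times> cball 0 1) \<inter> {x. poly (root_poly n (fst x)) (snd x) = 0})"
  have root_iff: "poly (root_poly n (sym_map n l)) t = 0 \<longleftrightarrow> (\<exists>i<n. t = l i)" for l t
    by (auto simp: poly_root_poly_sym_map)
  have roots_in_disc: "cmod t < 1" if w: "w \<in> K" and t: "poly (root_poly n w) t = 0" for w t
  proof -
    obtain v where "v \<in> polydisc n" "w = sym_map n v"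
      using w assms(2) unfolding symG_def by blast
    then show ?thesis
      using t root_iff by (auto simp: polydisc_def)
  qed
  have "compact roots"
    unfolding roots_def
    by (intro compact_continuous_image[OF continuous_on_snd] compact_Int_closed compact_Times assms(1)
        compact_cball closed_Collect_eq continuous_on_poly_root_poly) simp_all
  moreover have "roots \<subseteq> ball 0 1"
    using roots_in_disc by (auto simp: roots_def)
  ultimately obtain r where r: "0 \<le> r" "r < 1" "roots \<subseteq> cball 0 r"
    by (rule compact_subset_ball_radius)
  have roots_of_K: "l i \<in> roots" if lK: "sym_map n l \<in> K" and i: "i < n" for l i
  proof -
    have "poly (root_poly n (sym_map n l)) (l i) = 0"
      using root_iff i by blast
    with lK have "(sym_map n l, l i)
        \<in> (K \<times> cball 0 1) \<inter> {x. poly (root_poly n (fst x)) (snd x) = 0}"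
      using roots_in_disc[OF lK] by (auto simp: less_imp_le)
    then show ?thesis
      unfolding roots_def by (rule image_eqI[rotated]) simp
  qed
  show thesis
  proof (rule that[OF r(1,2)])
    show "cmod (l i) \<le> r" if "sym_map n l \<in> K" "i < n" for l i
      using r(3) roots_of_K[OF that] by auto
  qed
qed

lemma finite_gap_below:
  fixes A :: "real set"
  assumes "finite A" "r < R"
  obtains s where "r \<le> s" "s < R" "\<And>a. a \<in> A \<Longrightarrow> a < R \<Longrightarrow> a \<le> s"
proof
  define S where "S = insert r {a \<in> A. a < R}"
  have "finite S" using assms(1) by (simp add: S_def)
  show "r \<le> Max S" "\<And>a. a \<in> A \<Longrightarrow> a < R \<Longrightarrow> a \<le> Max S"
    using Max_ge[OF \<open>finite S\<close>] by (auto simp: S_def)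
  show "Max S < R"
    using Max_in[OF \<open>finite S\<close>] assms(2) by (auto simp: S_def)
qed

lemma prod_gt_two_power:
  fixes f :: "'a \<Rightarrow> real"
  assumes "finite I" "i0 \<in> I" "4 ^ card I \<le> f i0" "\<And>i. i \<in> I \<Longrightarrow> 1/2 \<le> f i"
  shows "2 ^ card I < (\<Prod>i\<in>I. f i)"
proof -
  obtain k where k: "card I = Suc k"
    using assms(1,2) by (metis card_gt_0_iff emptyE gr0_implies_Suc)
  have "(1/2) ^ k \<le> (\<Prod>i\<in>I - {i0}. f i)"
    using prod_mono[of "I - {i0}" "\<lambda>_. 1/2" f] assms(1,2,4) k by simp
  have "2 * 2 ^ card I = (4::real) * (4 * (1/2)) ^ k"
    by (simp add: k)
  also have "\<dots> = 4 ^ card I * (1/2) ^ k"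
    unfolding k power_mult_distrib by simp
  also have "\<dots> \<le> f i0 * (\<Prod>i\<in>I - {i0}. f i)"
    using assms(3) assms(4)[OF assms(2)] \<open>(1/2) ^ k \<le> _\<close> by (intro mult_mono) auto
  also have "\<dots> = (\<Prod>i\<in>I. f i)"
    using assms(1,2) by (simp add: prod.remove)
  finally show ?thesis
    using zero_less_power[of "2::real" "card I"] by linarith
qed

lemma poly_separating_cball:
  fixes l :: "nat \<Rightarrow> complex"
  assumes "0 \<le> r" "j < n" "r < cmod (l j)"
  obtains \<phi> :: "complex poly"
  where "\<And>x. cmod x \<le> r \<Longrightarrow> cmod (poly \<phi> x) \<le> 2"
    and "2 ^ n < (\<Prod>i<n. cmod (poly \<phi> (l i)))"
proof -
  define A where "A = (\<lambda>i. cmod (l i)) ` {..<n}"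
  have "finite A" "A \<noteq> {}"
    using assms(2) by (auto simp: A_def)
  define R where "R = Max A"
  obtain i0 where i0: "i0 < n" "cmod (l i0) = R"
    using Max_in[OF \<open>finite A\<close> \<open>A \<noteq> {}\<close>] by (auto simp: R_def A_def)
  have le_R: "cmod (l i) \<le> R" if "i < n" for i
    using Max_ge[OF \<open>finite A\<close>] that by (auto simp: R_def A_def)
  have "r < R"
    using assms(3) le_R[OF assms(2)] by linarith
  then obtain s where s: "r \<le> s" "s < R" and below_R: "\<And>a. a \<in> A \<Longrightarrow> a < R \<Longrightarrow> a \<le> s"
    using finite_gap_below[OF \<open>finite A\<close>] by blast
  define \<rho> where "\<rho> = (s + R) / 2"
  have \<rho>: "s < \<rho>" "\<rho> < R" "0 < \<rho>"
    using s assms(1) by (auto simp: \<rho>_def)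
  have "(\<lambda>m. (s / \<rho>) ^ m) \<longlonglongrightarrow> 0"
    using \<rho> s(1) assms(1) by (intro LIMSEQ_power_zero) simp
  then have "\<forall>\<^sub>F m in sequentially. (s / \<rho>) ^ m < 1/2"
    by (rule order_tendstoD) simp
  moreover have "filterlim (\<lambda>m. norm ((R / \<rho>) ^ m)) at_top sequentially"
    using \<rho> by (intro filterlim_at_infinity_imp_norm_at_top filterlim_realpow_sequentially_gt1) simp
  then have "\<forall>\<^sub>F m in sequentially. 4 ^ n + 1 \<le> norm ((R / \<rho>) ^ m)"
    by (simp add: filterlim_at_top)
  ultimately have
    "\<forall>\<^sub>F m in sequentially. (s / \<rho>) ^ m < 1/2 \<and> 4 ^ n + 1 \<le> norm ((R / \<rho>) ^ m)"
    by (rule eventually_conj)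
  then obtain m where m: "(s / \<rho>) ^ m < 1/2" "4 ^ n + 1 \<le> norm ((R / \<rho>) ^ m)"
    using eventually_happens'[OF sequentially_bot] by blast
  define \<phi> where "\<phi> = [:1:] + monom (1 / complex_of_real \<rho> ^ m) m"
  have norm_term: "cmod (x ^ m / complex_of_real \<rho> ^ m) = (cmod x / \<rho>) ^ m" for x
    using \<rho>(3) by (simp add: norm_divide norm_power power_divide)
  have poly_\<phi>: "poly \<phi> x = 1 + x ^ m / complex_of_real \<rho> ^ m" for x
    by (simp add: \<phi>_def poly_monom)
  have upper: "cmod (poly \<phi> x) \<le> 1 + (cmod x / \<rho>) ^ m" for x
    using norm_triangle_ineq[of 1 "x ^ m / complex_of_real \<rho> ^ m"] by (simp add: poly_\<phi> norm_term)
  have lower: "\<bar>1 - (cmod x / \<rho>) ^ m\<bar> \<le> cmod (poly \<phi> x)" for x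
    using norm_triangle_ineq3[of 1 "- (x ^ m / complex_of_real \<rho> ^ m)"]
    by (simp add: poly_\<phi> norm_term)
  show thesis
  proof
    show "cmod (poly \<phi> x) \<le> 2" if "cmod x \<le> r" for x
    proof -
      have "(cmod x / \<rho>) ^ m \<le> 1"
        using that s(1) \<rho> by (intro power_le_one) auto
      then show ?thesis using upper[of x] by simp
    qed
    have large: "4 ^ n \<le> cmod (poly \<phi> (l i))" if "cmod (l i) = R" for i
      using lower[of "l i"] m(2) that \<rho> by (simp add: power_divide)
    have "1/2 \<le> cmod (poly \<phi> (l i))" if "i < n" for i
    proof (cases "cmod (l i) = R")
      case True
      then show ?thesis using large[of i] one_le_power[of "4::real" n] by linarith
    next
      case False
      then have "cmod (l i) \<le> s"
        using below_R[of "cmod (l i)"] le_R[OF that] that by (auto simp: A_def less_le)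
      then have "(cmod (l i) / \<rho>) ^ m \<le> (s / \<rho>) ^ m"
        using \<rho> by (intro power_mono divide_right_mono) auto
      then show ?thesis using lower[of "l i"] m(1) by linarith
    qed
    then show "2 ^ n < (\<Prod>i<n. cmod (poly \<phi> (l i)))"
      using prod_gt_two_power[of "{..<n}" i0] i0 large by simp
  qed
qed

lemma poly_hull_subset_symG:
  assumes "compact K" "K \<subseteq> symG n"
  shows "poly_hull n K \<subseteq> symG n"
proof
  fix z assume z: "z \<in> poly_hull n K"
  then have "z \<in> Cn n"
    by (simp add: poly_hull_def)
  then obtain l where l: "l \<in> Cn n" "z = sym_map n l"
    using Cn_subset_sym_map_image by blast
  obtain r where r: "0 \<le> r" "r < 1"
    and roots_K: "\<And>\<mu> i. sym_map n \<mu> \<in> K \<Longrightarrow> i < n \<Longrightarrow> cmod (\<mu> i) \<le> r"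
    using symG_compact_root_bound[OF assms] by blast
  have "cmod (l j) < 1" if j: "j < n" for j
  proof (rule ccontr)
    assume "\<not> cmod (l j) < 1"
    with r(2) have "r < cmod (l j)"
      by linarith
    then obtain \<phi> where \<phi>_K: "\<And>x. cmod x \<le> r \<Longrightarrow> cmod (poly \<phi> x) \<le> 2"
      and \<phi>_l: "2 ^ n < (\<Prod>i<n. cmod (poly \<phi> (l i)))"
      using poly_separating_cball[OF r(1) j] by blast
    obtain G where G: "G \<in> poly_fun n" "\<And>\<mu>. G (sym_map n \<mu>) = (\<Prod>i<n. poly \<phi> (\<mu> i))"
      using symmetric_prod_in_poly_fun by blast
    have "cmod (G w) \<le> 2 ^ n" if w: "w \<in> K" for w
    proof -
      obtain \<mu> where \<mu>: "w = sym_map n \<mu>"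
        using w assms(2) unfolding symG_def by blast
      then have "cmod (G w) = (\<Prod>i<n. cmod (poly \<phi> (\<mu> i)))"
        by (simp add: G(2) prod_norm)
      also have "\<dots> \<le> (\<Prod>i<n. 2)"
        using \<phi>_K roots_K w \<mu> by (intro prod_mono) auto
      finally show ?thesis
        by simp
    qed
    then have "cmod (G z) \<le> 2 ^ n"
      using z G(1) unfolding poly_hull_def by blast
    then show False
      using \<phi>_l by (simp add: l G(2) prod_norm)
  qed
  then show "z \<in> symG n"
    using l unfolding symG_def polydisc_def by blast
qed

lemma poly_hull_subset_zero_set:
  assumes "P \<subseteq> poly_fun n" "K \<subseteq> zero_set n P"
  shows "poly_hull n K \<subseteq> zero_set n P"
proof
  fix z assume z: "z \<in> poly_hull n K"
  have "p z = 0" if "p \<in> P" for p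
  proof -
    have "\<forall>w\<in>K. cmod (p w) \<le> 0"
      using assms(2) that by (auto simp: zero_set_def)
    then show ?thesis
      using z that assms(1) unfolding poly_hull_def by fastforce
  qed
  with z show "z \<in> zero_set n P"
    by (simp add: poly_hull_def zero_set_def)
qed

lemma poly_convex_zero_set_Int_symG:
  assumes "P \<subseteq> poly_fun n"
  shows "poly_convex n (zero_set n P \<inter> symG n)"
  unfolding poly_convex_def
  using poly_hull_subset_zero_set[OF assms] poly_hull_subset_symG
  by (auto simp: zero_set_def)

theorem mainTheorem5:
  fixes n :: nat and \<Lambda> :: "(nat \<Rightarrow> complex) set"
  assumes "n \<ge> 2"
    and "distinguished_variety n \<Lambda>"
  shows "poly_convex n \<Lambda>"
proof -
  obtain P where "P \<subseteq> poly_fun n" "\<Lambda> = zero_set n P \<inter> symG n"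
    using assms(2) unfolding distinguished_variety_def by blast
  then show ?thesis
    using poly_convex_zero_set_Int_symG by simp
qed

end
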